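(* Let $f\colon \mathbb{R}\to\mathbb{R}$ be a $\mathcal{C}^1$-smooth strictly convex function and let $x\in\mathbb{R}$ be a point with $f'(x)\neq 0$. Let $g=f'(x)$ and choose any initial scalar $h>0$. Consider the procedure: while $f(x-hg)\ge f(x)$, replace $h$ by its unit-step BFGS update $h_+$ at $x$ (defined below). Then this procedure terminates after finitely many iterations, i.e. eventually $f(x-hg)<f(x)$.
   Context: For a $\mathcal{C}^1$-smooth convex $f\colon\mathbb{R}^n\to\mathbb{R}$, a point $x$ with gradient $g=\nabla f(x)$, and a symmetric positive definite $n\times n$ matrix $H$, the unit-step BFGS update $H_+$ is defined by $s=-Hg$, $x_+=x+s$, $g_+=\nabla f(x_+)$, $y=g_+-g$, $V=I-\frac{sy^T}{s^Ty}$, $H_+=VHV^T+\frac{ss^T}{s^Ty}$ (defined when $s^Ty\neq 0$; strict convexity and $g\ne 0$ guarantee $s^Ty>0$). Here $n=1$, so $H=h$ is a positive scalar and the point $x$ stays fixed throughout the procedure. *)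

theory Defs
  imports "HOL-Analysis.Analysis"
begin

definition strictly_convex :: "(real \<Rightarrow> real) \<Rightarrow> bool" where
  "strictly_convex f \<longleftrightarrow>
     (\<forall>a b t. a \<noteq> b \<longrightarrow> 0 < t \<longrightarrow> t < 1 \<longrightarrow>
        f (t * a + (1 - t) * b) < t * f a + (1 - t) * f b)"

(* Unit-step BFGS update of the scalar (1x1) matrix H = h at the point x,
   for the function f with derivative df, written literally as in the paper:
   s = -H g, x+ = x + s, g+ = df x+, y = g+ - g, V = I - s y^T/(s^T y),
   H+ = V H V^T + s s^T/(s^T y). *)
definition bfgs_update :: "(real \<Rightarrow> real) \<Rightarrow> real \<Rightarrow> real \<Rightarrow> real" where
  "bfgs_update df x h =
     (let g = df x; s = - h * g; xp = x + s; gp = df xp; y = gp - g;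
          V = 1 - (s * y) / (s * y)
      in V * h * V + (s * s) / (s * y))"

primrec bfgs_iter :: "(real \<Rightarrow> real) \<Rightarrow> real \<Rightarrow> real \<Rightarrow> nat \<Rightarrow> real" where
  "bfgs_iter df x h 0 = h"
| "bfgs_iter df x h (Suc k) = bfgs_update df x (bfgs_iter df x h k)"

end

theory Submission
  imports Defs
begin

text \<open>In dimension one the BFGS update is the secant step \<open>h\<^sub>+ = s / y\<close>. If the step
  \<open>x - h g\<close> does not decrease \<open>f\<close>, strict convexity forces the slope there to have the sign
  opposite to \<open>g\<close>, so the secant step shrinks \<open>h\<close> while keeping it positive. Were the procedure
  never to stop, \<open>h\<close> would decrease to a limit \<open>L\<close>; \<open>L = 0\<close> is impossible since the slope near
  \<open>x\<close> has the sign of \<open>g\<close>, and passing to the limit in the secant relation shows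
  \<open>f'(x - L g) = 0\<close>. Then \<open>x - L g\<close> is the strict minimiser of \<open>f\<close>, contradicting
  \<open>f(x - L g) \<ge> f(x)\<close>.\<close>

lemma strictly_convex_imp_convex_on:
  assumes "strictly_convex f"
  shows "convex_on UNIV f"
proof (rule convex_onI)
  fix t a b :: real
  assume t: "0 < t" "t < 1"
  show "f ((1 - t) *\<^sub>R a + t *\<^sub>R b) \<le> (1 - t) * f a + t * f b"
  proof (cases "a = b")
    case False
    then have "f ((1 - t) * a + (1 - (1 - t)) * b) < (1 - t) * f a + (1 - (1 - t)) * f b"
      using t by (intro assms[unfolded strictly_convex_def, rule_format]) auto
    then show ?thesis by simp
  qed (simp add: algebra_simps)
qed simp

lemma strictly_convex_above_tangent:
  assumes sc: "strictly_convex f" and D: "(f has_real_derivative D) (at a)" and "a \<noteq> b"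
  shows "f a + D * (b - a) < f b"
proof -
  define m where "m = (a + b) / 2"
  have "D * (m - a) \<le> f m - f a"
    using convex_on_imp_above_tangent[OF strictly_convex_imp_convex_on[OF sc]] D by auto
  moreover have "f ((1/2) * a + (1 - 1/2) * b) < (1/2) * f a + (1 - 1/2) * f b"
    using \<open>a \<noteq> b\<close> by (intro sc[unfolded strictly_convex_def, rule_format]) auto
  then have "f m < (f a + f b) / 2"
    unfolding m_def by (simp add: add_divide_distrib)
  moreover have "D * (b - a) = 2 * (D * (m - a))"
    unfolding m_def by (simp add: algebra_simps)
  ultimately show ?thesis
    by argo
qed

lemma bfgs_update_eq_secant:
  assumes "h \<noteq> 0" "df x \<noteq> 0" "df (x - h * df x) \<noteq> df x"
  shows "bfgs_update df x h = h * df x / (df x - df (x - h * df x))"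
  using assms by (simp add: bfgs_update_def Let_def field_simps)

lemma non_descent_step_slope:
  assumes sc: "strictly_convex f" and D: "(f has_real_derivative D) (at (x - h * g))"
    and "h > 0" "g \<noteq> 0" and no_descent: "f x \<le> f (x - h * g)"
  shows "g * D < 0"
proof -
  have "f (x - h * g) + D * (h * g) < f x"
    using strictly_convex_above_tangent[OF sc D, of x] \<open>h > 0\<close> \<open>g \<noteq> 0\<close> by simp
  then have "h * (g * D) < 0"
    using no_descent by (simp add: algebra_simps)
  then show ?thesis
    using \<open>h > 0\<close> by (simp add: mult_less_0_iff)
qed

lemma bfgs_iter_non_descent:
  assumes sc: "strictly_convex f" and D: "\<And>t. (f has_real_derivative df t) (at t)"
    and "df x \<noteq> 0" "h > 0"
    and no_descent: "\<And>k. f x \<le> f (x - bfgs_iter df x h k * df x)"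
  defines "H \<equiv> bfgs_iter df x h"
  shows "H k > 0 \<and> df x * df (x - H k * df x) < 0
    \<and> H (Suc k) * (df x - df (x - H k * df x)) = H k * df x"
proof -
  have slope: "df x * df (x - H k * df x) < 0" if "H k > 0" for k
    using non_descent_step_slope[OF sc D that \<open>df x \<noteq> 0\<close>] no_descent unfolding H_def by simp
  have step: "H (Suc k) > 0 \<and> H (Suc k) * (df x - df (x - H k * df x)) = H k * df x"
    if "H k > 0" for k
  proof -
    define g p where "g = df x" and "p = df (x - H k * df x)"
    have "g * p < 0" "g \<noteq> 0"
      using slope[OF \<open>H k > 0\<close>] \<open>df x \<noteq> 0\<close> unfolding g_def p_def by auto
    then have "g / (g - p) > 0" "p \<noteq> g"
      by (auto simp: divide_pos_pos divide_neg_neg mult_less_0_iff)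
    then have secant: "H (Suc k) = H k * (g / (g - p))"
      using bfgs_update_eq_secant[of "H k" df x] \<open>g \<noteq> 0\<close> \<open>H k > 0\<close>
      unfolding H_def g_def p_def by simp
    have "H (Suc k) > 0"
      unfolding secant using \<open>g / (g - p) > 0\<close> \<open>H k > 0\<close> by (rule mult_pos_pos[rotated])
    moreover have "H (Suc k) * (g - p) = H k * g"
      unfolding secant using \<open>p \<noteq> g\<close> by simp
    ultimately show ?thesis
      unfolding g_def p_def by simp
  qed
  have pos: "H k > 0" for k
    by (induction k) (use \<open>h > 0\<close> step in \<open>auto simp: H_def\<close>)
  show ?thesis
    using pos slope step by blast
qed

lemma secant_iteration_limit_critical:
  fixes d :: "real \<Rightarrow> real" and H :: "nat \<Rightarrow> real"
  assumes cont: "continuous_on UNIV d" and "d x \<noteq> 0"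
    and pos: "\<And>k. H k > 0" and slope: "\<And>k. d x * d (x - H k * d x) < 0"
    and rec: "\<And>k. H (Suc k) * (d x - d (x - H k * d x)) = H k * d x"
  shows "\<exists>L>0. H \<longlonglongrightarrow> L \<and> d (x - L * d x) = 0"
proof -
  define g where "g = d x"
  define p where "p k = x - H k * g" for k
  have "g * g > 0"
    using \<open>d x \<noteq> 0\<close> unfolding g_def by (auto simp: zero_less_mult_iff linorder_neq_iff)
  have "decseq H"
  proof (rule decseq_SucI)
    fix k
    have "H (Suc k) * (g * g) \<le> H (Suc k) * (g * g - g * d (p k))"
      using slope[of k] pos[of "Suc k"] unfolding g_def p_def by simp
    also have "\<dots> = g * (H (Suc k) * (g - d (p k)))"
      by (simp add: algebra_simps)
    also have "\<dots> = H k * (g * g)"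
      using rec[of k] unfolding g_def p_def by simp
    finally show "H (Suc k) \<le> H k"
      using \<open>g * g > 0\<close> by (simp only: mult_le_cancel_right_pos)
  qed
  moreover have "\<forall>k. 0 \<le> H k"
    using pos less_imp_le by blast
  ultimately obtain L where H_lim: "H \<longlonglongrightarrow> L"
    by (rule decseq_convergent)
  define q where "q = x - L * g"
  have d_lim: "(\<lambda>k. d (p k)) \<longlonglongrightarrow> d q"
    using cont H_lim unfolding p_def q_def
    by (intro isCont_tendsto_compose[of _ d] tendsto_intros) (auto simp: continuous_on_eq_continuous_at)
  have "g * d q \<le> 0"
    using slope
    by (intro LIMSEQ_le_const2[OF tendsto_mult[OF tendsto_const d_lim]]) (auto simp: g_def p_def less_imp_le)
  have "L \<ge> 0"
    using H_lim pos by (meson LIMSEQ_le_const less_imp_le)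
  moreover have "L \<noteq> 0"
  proof
    assume "L = 0"
    then show False
      using \<open>g * d q \<le> 0\<close> \<open>g * g > 0\<close> unfolding q_def g_def by simp
  qed
  ultimately have "L > 0"
    by simp
  have "L * (g - d q) = L * g"
  proof (rule LIMSEQ_unique)
    show "(\<lambda>k. H (Suc k) * (g - d (p k))) \<longlonglongrightarrow> L * (g - d q)"
      by (intro tendsto_intros d_lim LIMSEQ_Suc[OF H_lim])
    show "(\<lambda>k. H (Suc k) * (g - d (p k))) \<longlonglongrightarrow> L * g"
      using rec unfolding g_def p_def by (simp add: tendsto_mult_right[OF H_lim])
  qed
  then have "d q = 0"
    using \<open>L > 0\<close> by (simp add: algebra_simps)
  then show ?thesis
    using \<open>L > 0\<close> H_lim unfolding q_def g_def by blast
qed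

theorem mainTheorem1:
  fixes f :: "real \<Rightarrow> real" and x h :: real
  assumes diff: "\<forall>t. f differentiable (at t)"
    and C1: "continuous_on UNIV (deriv f)"
    and conv: "strictly_convex f"
    and g_nz: "deriv f x \<noteq> 0"
    and h_pos: "h > 0"
  shows "\<exists>k. f (x - bfgs_iter (deriv f) x h k * deriv f x) < f x"
proof (rule ccontr)
  define H where "H = bfgs_iter (deriv f) x h"
  assume "\<not> ?thesis"
  then have no_descent: "\<And>k. f x \<le> f (x - H k * deriv f x)"
    unfolding H_def by (simp add: not_less)
  have D: "\<And>t. (f has_real_derivative deriv f t) (at t)"
    using diff by (simp add: DERIV_deriv_iff_real_differentiable)
  obtain L where "L > 0" "H \<longlonglongrightarrow> L" and critical: "deriv f (x - L * deriv f x) = 0"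
    using secant_iteration_limit_critical[OF C1 g_nz]
      bfgs_iter_non_descent[OF conv D g_nz h_pos no_descent[unfolded H_def]]
    unfolding H_def by blast
  define q where "q = x - L * deriv f x"
  have "(\<lambda>k. f (x - H k * deriv f x)) \<longlonglongrightarrow> f q"
    unfolding q_def
    by (intro isCont_tendsto_compose[of _ f] tendsto_intros \<open>H \<longlonglongrightarrow> L\<close>) (use D DERIV_isCont in blast)
  then have "f x \<le> f q"
    using no_descent by (meson LIMSEQ_le_const)
  moreover have "f q < f x"
    using strictly_convex_above_tangent[OF conv D, of q x] critical \<open>L > 0\<close> g_nz
    unfolding q_def by simp
  ultimately show False
    by simp
qed

end
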